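(* Let $(\Omega_t)_{t\in(0,T)}$ be a family of open subsets of $\mathbb{R}^{n+1}$, $\bar\Omega_t=\phi_t(\bar\Omega)$ for a smooth family of diffeomorphisms $\phi_t$, evolving by $\frac{\partial x}{\partial t}=-\nabla f(x,t)$ for $x=\phi_t(q)\in\Omega_t$, where the smooth functions $f(t)$ satisfy \[ \frac{\partial f}{\partial t}+\Delta f=|\nabla f|^2+\frac{n+1}{2\tau}\quad\text{in }\Omega_t, \] and $\tau(t)>0$ satisfies $\frac{d\tau}{dt}=-1$, for $t\in(0,T)$. Then $W=\tau(2\Delta f-|\nabla f|^2)+f-(n+1)$ satisfies \[ \Big(\frac{d}{dt}+\Delta\Big)W=2\tau\Big|\nabla_i\nabla_j f-\frac{\delta_{ij}}{2\tau}\Big|^2+\nabla W\cdot\nabla f\quad\text{in }\Omega_t. \]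
   Context: For a function $F(x,t)$ on the moving domains, $\frac{dF}{dt}$ denotes the total time derivative along the trajectories of the flow, i.e. $\frac{dF}{dt}(\phi_t(q),t)=\frac{\partial}{\partial t}\big[F(\phi_t(q),t)\big]$; thus $\frac{dF}{dt}=\frac{\partial F}{\partial t}-\nabla F\cdot\nabla f$. All gradients, Laplacians and Hessians are Euclidean. *)

theory Defs
  imports "HOL-Analysis.Analysis"
begin

definition dirderiv :: "'b::real_normed_vector \<Rightarrow> ('b \<Rightarrow> 'c::real_normed_vector) \<Rightarrow> 'b \<Rightarrow> 'c" where
  "dirderiv v g x = frechet_derivative g (at x) v"

fun iter_dirderiv :: "'b::real_normed_vector list \<Rightarrow> ('b \<Rightarrow> 'c::real_normed_vector) \<Rightarrow> 'b \<Rightarrow> 'c" where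
  "iter_dirderiv [] g = g"
| "iter_dirderiv (v # vs) g = dirderiv v (iter_dirderiv vs g)"

text \<open>C-infinity on an open set U: every iterated directional derivative is
  (Frechet) differentiable on U (hence all derivatives exist and are continuous).\<close>
definition smooth_on :: "'b::real_normed_vector set \<Rightarrow> ('b \<Rightarrow> 'c::real_normed_vector) \<Rightarrow> bool" where
  "smooth_on U g \<longleftrightarrow> open U \<and> (\<forall>vs. iter_dirderiv vs g differentiable_on U)"

definition grad :: "('a::euclidean_space \<Rightarrow> real) \<Rightarrow> 'a \<Rightarrow> 'a" where
  "grad g x = (\<Sum>b\<in>Basis. dirderiv b g x *\<^sub>R b)"

definition hess :: "('a::euclidean_space \<Rightarrow> real) \<Rightarrow> 'a \<Rightarrow> 'a \<Rightarrow> 'a \<Rightarrow> real" where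
  "hess g x i j = dirderiv i (dirderiv j g) x"

definition lap :: "('a::euclidean_space \<Rightarrow> real) \<Rightarrow> 'a \<Rightarrow> real" where
  "lap g x = (\<Sum>b\<in>Basis. hess g x b b)"

definition smooth_diffeo_family ::
  "('a::euclidean_space \<Rightarrow> real \<Rightarrow> 'a) \<Rightarrow> 'a set \<Rightarrow> (real \<Rightarrow> 'a set) \<Rightarrow> real \<Rightarrow> bool" where
  "smooth_diffeo_family \<phi> \<Omega>0 \<Omega> T \<longleftrightarrow>
     (\<exists>U. closure \<Omega>0 \<times> {0<..<T} \<subseteq> U \<and> smooth_on U (\<lambda>(q,t). \<phi> q t)) \<and>
     (\<forall>t\<in>{0<..<T}.
        inj_on (\<lambda>q. \<phi> q t) (closure \<Omega>0) \<and>
        (\<lambda>q. \<phi> q t) ` closure \<Omega>0 = closure (\<Omega> t) \<and>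
        (\<lambda>q. \<phi> q t) ` \<Omega>0 = \<Omega> t \<and>
        (\<exists>\<psi> V. closure (\<Omega> t) \<subseteq> V \<and> smooth_on V \<psi> \<and>
               (\<forall>q\<in>closure \<Omega>0. \<psi> (\<phi> q t) = q)))"

text \<open>The quantity W = tau (2 Lap f - |grad f|^2) + f - (n+1), with n+1 = DIM('a).\<close>
definition Wfun :: "(real \<Rightarrow> real) \<Rightarrow> ('a::euclidean_space \<Rightarrow> real \<Rightarrow> real) \<Rightarrow> 'a \<Rightarrow> real \<Rightarrow> real" where
  "Wfun \<tau> f x t = \<tau> t * (2 * lap (\<lambda>y. f y t) x - (norm (grad (\<lambda>y. f y t) x))\<^sup>2)
                   + f x t - real DIM('a)"

end

(*
  Fix t, write g = f(-,t) and n+1 = DIM('a). The equation for f says that the partial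
  derivative h = (partial f/partial t)(-,t) equals -Lap g + |grad g|^2 + (n+1)/(2 tau), and
  since tau' = -1,
    dW/dt = -(2 Lap g - |grad g|^2) + tau (2 Lap h - 2 grad g . grad h) + h - grad W . grad g
  along a trajectory. Expanding Lap h, Lap W and grad W, all terms cancel except those
  governed by Bochner's formula Lap |grad g|^2 = 2 |Hess g|^2 + 2 grad g . grad (Lap g) and by
  |Hess g - I/(2 tau)|^2 = |Hess g|^2 - Lap g / tau + (n+1)/(4 tau^2).
  The identity is pointwise in space and time.
*)
theory Submission
  imports Defs
begin

section \<open>Directional derivatives\<close>

lemma has_derivative_dirderiv:
  "g differentiable (at x) \<Longrightarrow> (g has_derivative (\<lambda>v. dirderiv v g x)) (at x)"
  unfolding dirderiv_def using frechet_derivative_works by blast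

lemma dirderiv_eqI: "(g has_derivative g') (at x) \<Longrightarrow> dirderiv v g x = g' v"
  unfolding dirderiv_def using frechet_derivative_at by metis

lemma linear_dirderiv: "g differentiable (at x) \<Longrightarrow> linear (\<lambda>v. dirderiv v g x)"
  using has_derivative_dirderiv has_derivative_linear by blast

lemma dirderiv_cong_open:
  assumes "open S" "x \<in> S" "\<And>y. y \<in> S \<Longrightarrow> g1 y = g2 y"
  shows "dirderiv v g1 x = dirderiv v g2 x"
proof -
  have "(g1 has_derivative D) (at x) \<longleftrightarrow> (g2 has_derivative D) (at x)" for D
    using has_derivative_transform_within_open[OF _ assms(1,2), of g1 D UNIV g2]
      has_derivative_transform_within_open[OF _ assms(1,2), of g2 D UNIV g1]
    by (auto simp: assms(3))
  then show ?thesis unfolding dirderiv_def frechet_derivative_def by simp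
qed

lemma differentiable_cong_open:
  assumes "open S" "x \<in> S" "\<And>y. y \<in> S \<Longrightarrow> g1 y = g2 y" "g1 differentiable (at x)"
  shows "g2 differentiable (at x)"
  using has_derivative_transform_within_open[OF _ assms(1,2), of g1 _ UNIV g2] assms(3,4)
  unfolding differentiable_def by blast

lemma dirderiv_const: "dirderiv v (\<lambda>y. c) = (\<lambda>x. 0)"
  by (rule ext, rule dirderiv_eqI) (rule has_derivative_const)

lemma dirderiv_add:
  "g1 differentiable (at x) \<Longrightarrow> g2 differentiable (at x) \<Longrightarrow>
    dirderiv v (\<lambda>y. g1 y + g2 y) x = dirderiv v g1 x + dirderiv v g2 x"
  by (rule dirderiv_eqI) (auto intro!: derivative_eq_intros has_derivative_dirderiv)

lemma dirderiv_diff: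
  "g1 differentiable (at x) \<Longrightarrow> g2 differentiable (at x) \<Longrightarrow>
    dirderiv v (\<lambda>y. g1 y - g2 y) x = dirderiv v g1 x - dirderiv v g2 x"
  by (rule dirderiv_eqI) (auto intro!: derivative_eq_intros has_derivative_dirderiv)

lemma dirderiv_mult:
  fixes g1 g2 :: "'b::real_normed_vector \<Rightarrow> real"
  shows "g1 differentiable (at x) \<Longrightarrow> g2 differentiable (at x) \<Longrightarrow>
    dirderiv v (\<lambda>y. g1 y * g2 y) x = g1 x * dirderiv v g2 x + dirderiv v g1 x * g2 x"
  by (rule dirderiv_eqI) (auto intro!: derivative_eq_intros has_derivative_dirderiv)

lemma dirderiv_sum:
  "finite I \<Longrightarrow> (\<And>i. i \<in> I \<Longrightarrow> g i differentiable (at x)) \<Longrightarrow>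
    dirderiv v (\<lambda>y. \<Sum>i\<in>I. g i y) x = (\<Sum>i\<in>I. dirderiv v (g i) x)"
  by (rule dirderiv_eqI) (auto intro!: derivative_eq_intros has_derivative_dirderiv)

lemma has_real_derivative_dirderiv_line:
  fixes g :: "'b::real_normed_vector \<Rightarrow> real"
  assumes "g differentiable (at (a + s *\<^sub>R v))"
  shows "((\<lambda>s. g (a + s *\<^sub>R v)) has_real_derivative dirderiv v g (a + s *\<^sub>R v)) (at s)"
proof -
  have "((\<lambda>s. a + s *\<^sub>R v) has_derivative (\<lambda>r. r *\<^sub>R v)) (at s)"
    by (auto intro!: derivative_eq_intros)
  from has_derivative_compose[OF this has_derivative_dirderiv[OF assms]]
  have "((\<lambda>s. g (a + s *\<^sub>R v)) has_derivative (\<lambda>r. dirderiv (r *\<^sub>R v) g (a + s *\<^sub>R v))) (at s)" .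
  moreover have "(\<lambda>r. dirderiv (r *\<^sub>R v) g (a + s *\<^sub>R v)) = (*) (dirderiv v g (a + s *\<^sub>R v))"
    using linear_cmul[OF linear_dirderiv[OF assms]] by (auto simp: mult.commute)
  ultimately show ?thesis by (simp add: has_field_derivative_def)
qed

lemma inner_grad: "grad g1 x \<bullet> grad g2 x = (\<Sum>b\<in>Basis. dirderiv b g1 x * dirderiv b g2 x)"
  by (subst euclidean_inner) (auto simp: grad_def intro!: sum.cong)

lemma norm_grad_power2: "(norm (grad g x))\<^sup>2 = (\<Sum>b\<in>Basis. (dirderiv b g x)\<^sup>2)"
  unfolding power2_norm_eq_inner inner_grad by (simp add: power2_eq_square)

lemma dirderiv_eq_inner_grad:
  assumes "g differentiable (at x)"
  shows "dirderiv v g x = grad g x \<bullet> v"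
proof -
  have "dirderiv v g x = (\<Sum>b\<in>Basis. (v \<bullet> b) * dirderiv b g x)"
    using Linear_Algebra.linear_componentwise[OF linear_dirderiv[OF assms], of v 1] by simp
  also have "\<dots> = grad g x \<bullet> v"
    by (subst euclidean_inner) (auto simp: grad_def intro!: sum.cong)
  finally show ?thesis .
qed

section \<open>Smooth functions form an algebra\<close>

lemma iter_dirderiv_append:
  "iter_dirderiv (vs @ ws) g = iter_dirderiv vs (iter_dirderiv ws g)"
  by (induction vs) auto

lemma smooth_on_open: "smooth_on U g \<Longrightarrow> open U"
  by (simp add: smooth_on_def)

lemma smooth_on_iff_differentiable:
  "smooth_on U g \<longleftrightarrow> open U \<and> (\<forall>vs. \<forall>x\<in>U. iter_dirderiv vs g differentiable (at x))"
  unfolding smooth_on_def by (auto simp: differentiable_on_eq_differentiable_at)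

lemma smooth_on_imp_differentiable: "smooth_on U g \<Longrightarrow> x \<in> U \<Longrightarrow> g differentiable (at x)"
  unfolding smooth_on_iff_differentiable by (metis iter_dirderiv.simps(1))

lemma smooth_on_dirderiv: "smooth_on U g \<Longrightarrow> smooth_on U (dirderiv v g)"
  unfolding smooth_on_def by (metis iter_dirderiv.simps iter_dirderiv_append)

lemma smooth_on_subset: "smooth_on U g \<Longrightarrow> open V \<Longrightarrow> V \<subseteq> U \<Longrightarrow> smooth_on V g"
  unfolding smooth_on_def using differentiable_on_subset by blast

lemma iter_dirderiv_cong_open:
  assumes "open U" "\<And>y. y \<in> U \<Longrightarrow> g1 y = g2 y" "x \<in> U"
  shows "iter_dirderiv vs g1 x = iter_dirderiv vs g2 x"
  using assms(3)
proof (induction vs arbitrary: x)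
  case (Cons v vs)
  then show ?case by (auto intro: dirderiv_cong_open[OF assms(1)])
qed (simp add: assms(2))

lemma smooth_on_const:
  fixes U :: "'b::real_normed_vector set"
  assumes "open U"
  shows "smooth_on U (\<lambda>y. c)"
proof -
  have "iter_dirderiv vs (\<lambda>y::'b. c) = (\<lambda>y. if vs = [] then c else 0)" for vs
    by (induction vs) (auto simp: dirderiv_const)
  then show ?thesis
    using assms by (simp add: smooth_on_def differentiable_on_const)
qed

text \<open>Only lower-order derivatives are assumed to exist, which is all the induction in
  \<open>differentiable_iter_dirderiv_mult\<close> can supply.\<close>
lemma iter_dirderiv_add:
  assumes "open U" "x \<in> U"
    and "\<And>ws y. length ws < length vs \<Longrightarrow> y \<in> U \<Longrightarrow> iter_dirderiv ws g1 differentiable (at y)"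
    and "\<And>ws y. length ws < length vs \<Longrightarrow> y \<in> U \<Longrightarrow> iter_dirderiv ws g2 differentiable (at y)"
  shows "iter_dirderiv vs (\<lambda>y. g1 y + g2 y) x = iter_dirderiv vs g1 x + iter_dirderiv vs g2 x"
  using assms(2-)
proof (induction vs arbitrary: x)
  case (Cons v vs)
  have "iter_dirderiv (v # vs) (\<lambda>y. g1 y + g2 y) x
      = dirderiv v (\<lambda>y. iter_dirderiv vs g1 y + iter_dirderiv vs g2 y) x"
    using Cons by (auto intro!: dirderiv_cong_open[OF assms(1)])
  also have "\<dots> = iter_dirderiv (v # vs) g1 x + iter_dirderiv (v # vs) g2 x"
    using Cons by (auto intro!: dirderiv_add)
  finally show ?case .
qed simp

lemma smooth_on_add:
  assumes "smooth_on U g1" "smooth_on U g2"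
  shows "smooth_on U (\<lambda>y. g1 y + g2 y)"
  unfolding smooth_on_iff_differentiable
proof (intro conjI allI ballI)
  show U: "open U" using smooth_on_open[OF assms(1)] .
  fix vs x assume x: "x \<in> U"
  have "iter_dirderiv vs g1 y + iter_dirderiv vs g2 y = iter_dirderiv vs (\<lambda>y. g1 y + g2 y) y"
    if "y \<in> U" for y
    using assms that by (auto intro!: iter_dirderiv_add[OF U, symmetric] simp: smooth_on_iff_differentiable)
  then show "iter_dirderiv vs (\<lambda>y. g1 y + g2 y) differentiable (at x)"
    by (rule differentiable_cong_open[OF U x])
      (use assms x in \<open>auto intro!: differentiable_add simp: smooth_on_iff_differentiable\<close>)
qed

lemma differentiable_iter_dirderiv_mult:
  fixes g1 g2 :: "'b::real_normed_vector \<Rightarrow> real"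
  assumes "smooth_on U g1" "smooth_on U g2" "x \<in> U"
  shows "iter_dirderiv vs (\<lambda>y. g1 y * g2 y) differentiable (at x)"
  using assms
proof (induction "length vs" arbitrary: vs g1 g2 x rule: less_induct)
  case less
  have U: "open U" using smooth_on_open[OF less.prems(1)] .
  have d: "g1 differentiable (at y)" "g2 differentiable (at y)" if "y \<in> U" for y
    using smooth_on_imp_differentiable less.prems(1,2) that by blast+
  show ?case
  proof (cases vs rule: rev_cases)
    case Nil
    then show ?thesis using differentiable_mult[OF d[OF less.prems(3)]] by simp
  next
    case (snoc ws v)
    define p1 where "p1 = (\<lambda>y. g1 y * dirderiv v g2 y)"
    define p2 where "p2 = (\<lambda>y. dirderiv v g1 y * g2 y)"
    have p_diff: "iter_dirderiv ws' p1 differentiable (at y)" "iter_dirderiv ws' p2 differentiable (at y)"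
      if "length ws' \<le> length ws" "y \<in> U" for ws' y
    proof -
      have "length ws' < length vs" using that snoc by simp
      then show "iter_dirderiv ws' p1 differentiable (at y)" "iter_dirderiv ws' p2 differentiable (at y)"
        unfolding p1_def p2_def
        by (intro less.hyps that(2) less.prems smooth_on_dirderiv; assumption)+
    qed
    have "iter_dirderiv ws p1 y + iter_dirderiv ws p2 y = iter_dirderiv vs (\<lambda>y. g1 y * g2 y) y"
      if y: "y \<in> U" for y
    proof -
      have "iter_dirderiv vs (\<lambda>y. g1 y * g2 y) y = iter_dirderiv ws (\<lambda>y. p1 y + p2 y) y"
        unfolding snoc iter_dirderiv_append
        by (rule iter_dirderiv_cong_open[OF U _ y]) (simp add: dirderiv_mult d p1_def p2_def)
      also have "\<dots> = iter_dirderiv ws p1 y + iter_dirderiv ws p2 y"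
        using y p_diff by (intro iter_dirderiv_add[OF U]) auto
      finally show ?thesis by simp
    qed
    then show ?thesis
      by (rule differentiable_cong_open[OF U less.prems(3)])
        (use p_diff less.prems(3) in \<open>auto intro!: differentiable_add\<close>)
  qed
qed

lemma smooth_on_mult:
  fixes g1 g2 :: "'b::real_normed_vector \<Rightarrow> real"
  assumes "smooth_on U g1" "smooth_on U g2"
  shows "smooth_on U (\<lambda>y. g1 y * g2 y)"
  using assms differentiable_iter_dirderiv_mult[OF assms]
  by (simp add: smooth_on_iff_differentiable)

lemma smooth_on_sum:
  assumes "finite I" "open U" "\<And>i. i \<in> I \<Longrightarrow> smooth_on U (g i)"
  shows "smooth_on U (\<lambda>y. \<Sum>i\<in>I. g i y)"
  using assms by (induction I rule: finite_induct) (auto intro: smooth_on_const smooth_on_add)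

lemma smooth_on_cmult:
  fixes g :: "'b::real_normed_vector \<Rightarrow> real"
  assumes "smooth_on U g"
  shows "smooth_on U (\<lambda>y. c * g y)"
  using smooth_on_mult[OF smooth_on_const[OF smooth_on_open[OF assms]] assms] .

lemma smooth_on_diff:
  fixes g1 g2 :: "'b::real_normed_vector \<Rightarrow> real"
  assumes "smooth_on U g1" "smooth_on U g2"
  shows "smooth_on U (\<lambda>y. g1 y - g2 y)"
  using smooth_on_add[OF assms(1) smooth_on_cmult[OF assms(2), of "-1"]] by simp

section \<open>Symmetry of mixed derivatives\<close>

lemma second_difference_mean_value:
  fixes g :: "'v::real_normed_vector \<Rightarrow> real"
  assumes g: "smooth_on S g" and d: "d > 0"
    and rect: "\<And>s r. 0 \<le> s \<Longrightarrow> s \<le> d \<Longrightarrow> 0 \<le> r \<Longrightarrow> r \<le> d \<Longrightarrow> x + s *\<^sub>R u + r *\<^sub>R v \<in> S"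
  obtains \<sigma> \<rho> where "0 < \<sigma>" "\<sigma> < d" "0 < \<rho>" "\<rho> < d"
    "g (x + d *\<^sub>R u + d *\<^sub>R v) - g (x + d *\<^sub>R u) - g (x + d *\<^sub>R v) + g x
       = d * d * dirderiv v (dirderiv u g) (x + \<sigma> *\<^sub>R u + \<rho> *\<^sub>R v)"
proof -
  define k where "k s = g ((x + d *\<^sub>R v) + s *\<^sub>R u) - g (x + s *\<^sub>R u)" for s
  have "DERIV k s :> dirderiv u g ((x + d *\<^sub>R v) + s *\<^sub>R u) - dirderiv u g (x + s *\<^sub>R u)"
    if "0 \<le> s" "s \<le> d" for s
    unfolding k_def using that d rect[of s d] rect[of s 0]
    by (intro DERIV_diff has_real_derivative_dirderiv_line smooth_on_imp_differentiable[OF g])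
      (simp_all add: algebra_simps)
  from MVT2[OF d this] obtain \<sigma> where \<sigma>: "0 < \<sigma>" "\<sigma> < d"
    "k d - k 0 = d * (dirderiv u g ((x + d *\<^sub>R v) + \<sigma> *\<^sub>R u) - dirderiv u g (x + \<sigma> *\<^sub>R u))"
    by auto
  define m where "m r = dirderiv u g ((x + \<sigma> *\<^sub>R u) + r *\<^sub>R v)" for r
  have "DERIV m r :> dirderiv v (dirderiv u g) ((x + \<sigma> *\<^sub>R u) + r *\<^sub>R v)"
    if "0 \<le> r" "r \<le> d" for r
    unfolding m_def using that \<sigma> rect[of \<sigma> r]
    by (intro has_real_derivative_dirderiv_line smooth_on_imp_differentiable[OF smooth_on_dirderiv[OF g]])
      simp
  from MVT2[OF d this] obtain \<rho> where \<rho>: "0 < \<rho>" "\<rho> < d"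
    "m d - m 0 = d * dirderiv v (dirderiv u g) ((x + \<sigma> *\<^sub>R u) + \<rho> *\<^sub>R v)"
    by auto
  have "g (x + d *\<^sub>R u + d *\<^sub>R v) - g (x + d *\<^sub>R u) - g (x + d *\<^sub>R v) + g x = k d - k 0"
    unfolding k_def by (simp add: algebra_simps)
  also have "\<dots> = d * (m d - m 0)"
    using \<sigma>(3) unfolding m_def by (simp add: algebra_simps)
  also have "\<dots> = d * d * dirderiv v (dirderiv u g) (x + \<sigma> *\<^sub>R u + \<rho> *\<^sub>R v)"
    using \<rho>(3) by simp
  finally show ?thesis using that \<sigma> \<rho> by blast
qed

lemma small_parallelogram_in_ball:
  fixes x u v :: "'v::real_normed_vector"
  assumes "e > 0"
  obtains d where "d > 0"
    "\<And>s r. 0 \<le> s \<Longrightarrow> s \<le> d \<Longrightarrow> 0 \<le> r \<Longrightarrow> r \<le> d \<Longrightarrow> x + s *\<^sub>R u + r *\<^sub>R v \<in> ball x e"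
proof
  define M where "M = norm u + norm v + 1"
  have M: "M > 0" by (simp add: M_def add_nonneg_pos)
  show "e / (3 * M) > 0" using assms M by simp
  fix s r assume sr: "0 \<le> s" "s \<le> e / (3 * M)" "0 \<le> r" "r \<le> e / (3 * M)"
  have "s * norm u \<le> e / (3 * M) * M" "r * norm v \<le> e / (3 * M) * M"
    using sr by (intro mult_mono; simp add: M_def)+
  then have "dist (x + s *\<^sub>R u + r *\<^sub>R v) x \<le> 2 * (e / 3)"
    using sr M norm_triangle_ineq[of "s *\<^sub>R u" "r *\<^sub>R v"] by (simp add: dist_norm)
  then show "x + s *\<^sub>R u + r *\<^sub>R v \<in> ball x e" using assms by (simp add: dist_commute)
qed

text \<open>Schwarz's theorem: both mixed derivatives are limits of the same second difference
  quotient, by the mean value theorem applied in the two orders.\<close>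
lemma dirderiv_commute:
  fixes g :: "'v::real_normed_vector \<Rightarrow> real"
  assumes g: "smooth_on S g" and x: "x \<in> S"
  shows "dirderiv v (dirderiv u g) x = dirderiv u (dirderiv v g) x"
proof (rule ccontr)
  let ?A = "dirderiv v (dirderiv u g)" and ?B = "dirderiv u (dirderiv v g)"
  assume "?A x \<noteq> ?B x"
  then have \<epsilon>: "\<bar>?A x - ?B x\<bar> / 2 > 0" by simp
  have "continuous (at x) ?A" "continuous (at x) ?B"
    using x by (auto intro!: differentiable_imp_continuous_within smooth_on_imp_differentiable
        smooth_on_dirderiv g)
  then obtain d1 d2 where d1: "d1 > 0" "\<And>y. dist y x < d1 \<Longrightarrow> dist (?A y) (?A x) < \<bar>?A x - ?B x\<bar> / 2"
    and d2: "d2 > 0" "\<And>y. dist y x < d2 \<Longrightarrow> dist (?B y) (?B x) < \<bar>?A x - ?B x\<bar> / 2"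
    using \<epsilon> unfolding continuous_at_eps_delta by metis
  obtain e where e: "e > 0" "ball x e \<subseteq> S"
    using smooth_on_open[OF g] x open_contains_ball by blast
  have "min e (min d1 d2) > 0" using e d1 d2 by simp
  then obtain d where d: "d > 0" and near:
    "\<And>s r. 0 \<le> s \<Longrightarrow> s \<le> d \<Longrightarrow> 0 \<le> r \<Longrightarrow> r \<le> d \<Longrightarrow> x + s *\<^sub>R u + r *\<^sub>R v \<in> ball x (min e (min d1 d2))"
    by (rule small_parallelogram_in_ball[where x=x and u=u and v=v]) blast
  have rect: "x + s *\<^sub>R u + r *\<^sub>R v \<in> S" if "0 \<le> s" "s \<le> d" "0 \<le> r" "r \<le> d" for s r
    using near[OF that] e by auto
  have rect': "x + s *\<^sub>R v + r *\<^sub>R u \<in> S" if "0 \<le> s" "s \<le> d" "0 \<le> r" "r \<le> d" for s r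
    using rect[of r s] that by (simp add: algebra_simps)
  obtain s1 r1 where 1: "0 < s1" "s1 < d" "0 < r1" "r1 < d"
     "g (x + d *\<^sub>R u + d *\<^sub>R v) - g (x + d *\<^sub>R u) - g (x + d *\<^sub>R v) + g x
       = d * d * ?A (x + s1 *\<^sub>R u + r1 *\<^sub>R v)"
    using second_difference_mean_value[OF g d rect] by blast
  obtain s2 r2 where 2: "0 < s2" "s2 < d" "0 < r2" "r2 < d"
     "g (x + d *\<^sub>R v + d *\<^sub>R u) - g (x + d *\<^sub>R v) - g (x + d *\<^sub>R u) + g x
       = d * d * ?B (x + s2 *\<^sub>R v + r2 *\<^sub>R u)"
    using second_difference_mean_value[OF g d rect'] by blast
  have "?A (x + s1 *\<^sub>R u + r1 *\<^sub>R v) = ?B (x + r2 *\<^sub>R u + s2 *\<^sub>R v)"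
    using 1(5) 2(5) d by (simp add: algebra_simps)
  moreover have "dist (?A (x + s1 *\<^sub>R u + r1 *\<^sub>R v)) (?A x) < \<bar>?A x - ?B x\<bar> / 2"
    using near[of s1 r1] 1 by (intro d1(2)) (auto simp: dist_commute)
  moreover have "dist (?B (x + r2 *\<^sub>R u + s2 *\<^sub>R v)) (?B x) < \<bar>?A x - ?B x\<bar> / 2"
    using near[of r2 s2] 2 by (intro d2(2)) (auto simp: dist_commute)
  ultimately show False by (simp add: dist_real_def abs_if split: if_split_asm)
qed

lemma dirderiv_commute3:
  fixes g :: "'v::real_normed_vector \<Rightarrow> real"
  assumes g: "smooth_on S g" and x: "x \<in> S"
  shows "dirderiv w (dirderiv v (dirderiv u g)) x = dirderiv u (dirderiv w (dirderiv v g)) x"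
proof -
  have "dirderiv w (dirderiv v (dirderiv u g)) x = dirderiv w (dirderiv u (dirderiv v g)) x"
    by (rule dirderiv_cong_open[OF smooth_on_open[OF g] x]) (rule dirderiv_commute[OF g])
  also have "\<dots> = dirderiv u (dirderiv w (dirderiv v g)) x"
    by (rule dirderiv_commute[OF smooth_on_dirderiv[OF g] x])
  finally show ?thesis .
qed

section \<open>Gradient, Hessian and Laplacian\<close>

lemma grad_cong_open:
  "open S \<Longrightarrow> x \<in> S \<Longrightarrow> (\<And>y. y \<in> S \<Longrightarrow> g1 y = g2 y) \<Longrightarrow> grad g1 x = grad g2 x"
  unfolding grad_def by (simp add: dirderiv_cong_open[of S x g1 g2])

lemma hess_cong_open:
  assumes "open S" "x \<in> S" "\<And>y. y \<in> S \<Longrightarrow> g1 y = g2 y"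
  shows "hess g1 x i j = hess g2 x i j"
  unfolding hess_def
  by (rule dirderiv_cong_open[OF assms(1,2)]) (rule dirderiv_cong_open[OF assms(1) _ assms(3)])

lemma lap_cong_open:
  assumes "open S" "x \<in> S" "\<And>y. y \<in> S \<Longrightarrow> g1 y = g2 y"
  shows "lap g1 x = lap g2 x"
  unfolding lap_def using hess_cong_open[OF assms] by simp

lemma grad_add:
  "g1 differentiable (at x) \<Longrightarrow> g2 differentiable (at x) \<Longrightarrow>
    grad (\<lambda>y. g1 y + g2 y) x = grad g1 x + grad g2 x"
  by (simp add: grad_def dirderiv_add scaleR_add_left sum.distrib)

lemma grad_diff:
  "g1 differentiable (at x) \<Longrightarrow> g2 differentiable (at x) \<Longrightarrow>
    grad (\<lambda>y. g1 y - g2 y) x = grad g1 x - grad g2 x"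
  by (simp add: grad_def dirderiv_diff scaleR_diff_left sum_subtractf)

lemma grad_cmult:
  "g differentiable (at x) \<Longrightarrow> grad (\<lambda>y. c * g y) x = c *\<^sub>R grad g x"
  by (simp add: grad_def dirderiv_mult dirderiv_const scaleR_sum_right)

lemma grad_const: "grad (\<lambda>y. c) x = 0"
  by (simp add: grad_def dirderiv_const)

lemma hess_add:
  assumes "smooth_on S g1" "smooth_on S g2" "x \<in> S"
  shows "hess (\<lambda>y. g1 y + g2 y) x i j = hess g1 x i j + hess g2 x i j"
proof -
  have "hess (\<lambda>y. g1 y + g2 y) x i j = dirderiv i (\<lambda>y. dirderiv j g1 y + dirderiv j g2 y) x"
    unfolding hess_def using assms
    by (intro dirderiv_cong_open[OF smooth_on_open[OF assms(1)] assms(3)] dirderiv_add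
        smooth_on_imp_differentiable)
  then show ?thesis
    using assms
    by (simp add: hess_def dirderiv_add smooth_on_imp_differentiable[OF _ assms(3)] smooth_on_dirderiv)
qed

lemma hess_mult:
  fixes g1 g2 :: "'a::euclidean_space \<Rightarrow> real"
  assumes "smooth_on S g1" "smooth_on S g2" "x \<in> S"
  shows "hess (\<lambda>y. g1 y * g2 y) x i j = g1 x * hess g2 x i j + dirderiv i g1 x * dirderiv j g2 x
    + dirderiv j g1 x * dirderiv i g2 x + hess g1 x i j * g2 x"
proof -
  have "hess (\<lambda>y. g1 y * g2 y) x i j
      = dirderiv i (\<lambda>y. g1 y * dirderiv j g2 y + dirderiv j g1 y * g2 y) x"
    unfolding hess_def using assms
    by (intro dirderiv_cong_open[OF smooth_on_open[OF assms(1)] assms(3)] dirderiv_mult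
        smooth_on_imp_differentiable)
  then show ?thesis
    using assms
    by (simp add: hess_def dirderiv_add dirderiv_mult smooth_on_imp_differentiable[OF _ assms(3)]
        smooth_on_dirderiv differentiable_mult)
qed

lemma lap_add:
  "smooth_on S g1 \<Longrightarrow> smooth_on S g2 \<Longrightarrow> x \<in> S \<Longrightarrow>
    lap (\<lambda>y. g1 y + g2 y) x = lap g1 x + lap g2 x"
  by (simp add: lap_def hess_add sum.distrib)

lemma lap_mult:
  fixes g1 g2 :: "'a::euclidean_space \<Rightarrow> real"
  shows "smooth_on S g1 \<Longrightarrow> smooth_on S g2 \<Longrightarrow> x \<in> S \<Longrightarrow>
    lap (\<lambda>y. g1 y * g2 y) x = g1 x * lap g2 x + 2 * (grad g1 x \<bullet> grad g2 x) + lap g1 x * g2 x"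
  by (simp add: lap_def hess_mult inner_grad sum.distrib sum_distrib_left sum_distrib_right)

lemma lap_const: "lap (\<lambda>y. c) x = 0"
  by (simp add: lap_def hess_def dirderiv_const)

lemma lap_cmult:
  fixes g :: "'a::euclidean_space \<Rightarrow> real"
  assumes "smooth_on S g" "x \<in> S"
  shows "lap (\<lambda>y. c * g y) x = c * lap g x"
  using lap_mult[OF smooth_on_const[OF smooth_on_open[OF assms(1)]] assms]
  by (simp add: lap_const grad_const)

lemma lap_diff:
  fixes g1 g2 :: "'a::euclidean_space \<Rightarrow> real"
  assumes "smooth_on S g1" "smooth_on S g2" "x \<in> S"
  shows "lap (\<lambda>y. g1 y - g2 y) x = lap g1 x - lap g2 x"
  using lap_add[OF assms(1) smooth_on_cmult[OF assms(2), of "-1"] assms(3)]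
    lap_cmult[OF assms(2,3), of "-1"]
  by simp

lemma lap_sum:
  assumes "finite I" "\<And>i. i \<in> I \<Longrightarrow> smooth_on S (g i)" "x \<in> S"
  shows "lap (\<lambda>y. \<Sum>i\<in>I. g i y) x = (\<Sum>i\<in>I. lap (g i) x)"
  using assms(1,2)
proof (induction I rule: finite_induct)
  case empty
  then show ?case by (simp add: lap_const)
next
  case (insert i I)
  have "smooth_on S (\<lambda>y. \<Sum>i\<in>I. g i y)"
    using insert smooth_on_open[OF insert.prems[of i]] by (intro smooth_on_sum) auto
  with insert show ?case
    using lap_add[OF _ _ assms(3)] by simp
qed

lemma lap_dirderiv:
  assumes "smooth_on S g" "x \<in> S"
  shows "lap (dirderiv v g) x = dirderiv v (lap g) x"
proof -
  have "lap (dirderiv v g) x = (\<Sum>b\<in>Basis. dirderiv v (dirderiv b (dirderiv b g)) x)"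
    unfolding lap_def hess_def using dirderiv_commute3[OF assms] by simp
  also have "\<dots> = dirderiv v (\<lambda>y. \<Sum>b\<in>Basis. dirderiv b (dirderiv b g) y) x"
    by (intro dirderiv_sum[symmetric] finite_Basis smooth_on_imp_differentiable[OF _ assms(2)]
        smooth_on_dirderiv assms(1))
  finally show ?thesis by (simp add: lap_def[abs_def] hess_def)
qed

lemma smooth_on_lap: "smooth_on S g \<Longrightarrow> smooth_on S (lap g)"
  unfolding lap_def[abs_def] hess_def
  by (intro smooth_on_sum finite_Basis smooth_on_dirderiv) (auto intro: smooth_on_open)

lemma smooth_on_norm_grad_power2:
  fixes g :: "'a::euclidean_space \<Rightarrow> real"
  shows "smooth_on S g \<Longrightarrow> smooth_on S (\<lambda>y. (norm (grad g y))\<^sup>2)"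
  unfolding norm_grad_power2 unfolding power2_eq_square
  by (intro smooth_on_sum finite_Basis smooth_on_mult smooth_on_dirderiv) (auto intro: smooth_on_open)

lemma lap_norm_grad_power2:
  fixes g :: "'a::euclidean_space \<Rightarrow> real"
  assumes g: "smooth_on S g" and x: "x \<in> S"
  shows "lap (\<lambda>y. (norm (grad g y))\<^sup>2) x
    = 2 * (\<Sum>i\<in>Basis. \<Sum>j\<in>Basis. (hess g x i j)\<^sup>2) + 2 * (grad g x \<bullet> grad (lap g) x)"
proof -
  have dg: "smooth_on S (dirderiv b g)" for b
    using g by (rule smooth_on_dirderiv)
  have "lap (\<lambda>y. (norm (grad g y))\<^sup>2) x = (\<Sum>b\<in>Basis. lap (\<lambda>y. dirderiv b g y * dirderiv b g y) x)"
    unfolding norm_grad_power2 unfolding power2_eq_square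
    using x by (intro lap_sum) (auto intro: smooth_on_mult dg)
  also have "\<dots> = (\<Sum>b\<in>Basis. 2 * (\<Sum>c\<in>Basis. (hess g x c b)\<^sup>2)
      + 2 * (dirderiv b g x * dirderiv b (lap g) x))"
    using x by (simp add: lap_mult[OF dg dg] lap_dirderiv[OF g] inner_grad hess_def power2_eq_square
        algebra_simps)
  also have "\<dots> = 2 * (\<Sum>b\<in>Basis. \<Sum>c\<in>Basis. (hess g x c b)\<^sup>2)
      + 2 * (\<Sum>b\<in>Basis. dirderiv b g x * dirderiv b (lap g) x)"
    by (simp add: sum.distrib sum_distrib_left)
  also have "\<dots> = 2 * (\<Sum>i\<in>Basis. \<Sum>j\<in>Basis. (hess g x i j)\<^sup>2) + 2 * (grad g x \<bullet> grad (lap g) x)"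
    by (subst sum.swap) (simp add: inner_grad)
  finally show ?thesis .
qed

section \<open>Functions of space and time\<close>

lemma open_slice: "open U \<Longrightarrow> open {y. (y, s) \<in> U}"
  using open_vimage[of U "\<lambda>y. (y, s)"] by (simp add: vimage_def continuous_on_Pair)

lemma dirderiv_slice:
  fixes F :: "'b::real_normed_vector \<times> real \<Rightarrow> real"
  assumes "F differentiable (at (y, s))"
  shows "dirderiv v (\<lambda>y. F (y, s)) y = dirderiv (v, 0) F (y, s)"
proof -
  have "((\<lambda>y. (y, s)) has_derivative (\<lambda>v. (v, 0))) (at y)"
    by (auto intro!: derivative_eq_intros)
  from has_derivative_compose[OF this has_derivative_dirderiv[OF assms]] show ?thesis
    by (rule dirderiv_eqI)
qed

lemma iter_dirderiv_slice:
  fixes F :: "'b::real_normed_vector \<times> real \<Rightarrow> real"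
  assumes F: "smooth_on U F" and ys: "(y, s) \<in> U"
  shows "iter_dirderiv vs (\<lambda>y. F (y, s)) y = iter_dirderiv (map (\<lambda>v. (v, 0)) vs) F (y, s)"
  using ys
proof (induction vs arbitrary: y)
  case (Cons v vs)
  have "iter_dirderiv (v # vs) (\<lambda>y. F (y, s)) y
      = dirderiv v (\<lambda>y. iter_dirderiv (map (\<lambda>v. (v, 0)) vs) F (y, s)) y"
    using Cons open_slice[OF smooth_on_open[OF F]]
    by (auto intro!: dirderiv_cong_open[where S="{y. (y, s) \<in> U}"])
  also have "\<dots> = iter_dirderiv (map (\<lambda>v. (v, 0)) (v # vs)) F (y, s)"
    using F Cons.prems by (simp add: dirderiv_slice smooth_on_iff_differentiable)
  finally show ?case .
qed simp

lemma smooth_on_slice: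
  fixes F :: "'b::real_normed_vector \<times> real \<Rightarrow> real"
  assumes F: "smooth_on U F"
  shows "smooth_on {y. (y, s) \<in> U} (\<lambda>y. F (y, s))"
  unfolding smooth_on_iff_differentiable
proof (intro conjI allI ballI)
  show S: "open {y. (y, s) \<in> U}" using open_slice[OF smooth_on_open[OF F]] .
  fix vs y assume y: "y \<in> {y. (y, s) \<in> U}"
  have "iter_dirderiv (map (\<lambda>v. (v, 0)) vs) F differentiable (at (y, s))"
    using F y by (simp add: smooth_on_iff_differentiable)
  then have "(\<lambda>y. iter_dirderiv (map (\<lambda>v. (v, 0)) vs) F (y, s)) differentiable (at y)"
    using differentiable_chain_at[of "\<lambda>y. (y, s)" y] by (simp add: o_def)
  then show "iter_dirderiv vs (\<lambda>y. F (y, s)) differentiable (at y)"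
    by (rule differentiable_cong_open[OF S y, rotated]) (simp add: iter_dirderiv_slice[OF F])
qed

lemma lap_slice:
  fixes F :: "'a::euclidean_space \<times> real \<Rightarrow> real"
  assumes "smooth_on U F" "(y, s) \<in> U"
  shows "lap (\<lambda>y. F (y, s)) y = (\<Sum>b\<in>Basis. dirderiv (b, 0) (dirderiv (b, 0) F) (y, s))"
  using iter_dirderiv_slice[OF assms, of "[b, b]" for b] by (simp add: lap_def hess_def)

lemma norm_grad_slice_power2:
  fixes F :: "'a::euclidean_space \<times> real \<Rightarrow> real"
  assumes "smooth_on U F" "(y, s) \<in> U"
  shows "(norm (grad (\<lambda>y. F (y, s)) y))\<^sup>2 = (\<Sum>b\<in>Basis. (dirderiv (b, 0) F (y, s))\<^sup>2)"
  using iter_dirderiv_slice[OF assms, of "[b]" for b] by (simp add: norm_grad_power2)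

lemma dirderiv_time_lap_slice:
  fixes F :: "'a::euclidean_space \<times> real \<Rightarrow> real"
  assumes F: "smooth_on U F" and xt: "(x, t) \<in> U"
  shows "(\<lambda>p. lap (\<lambda>y. F (y, snd p)) (fst p)) differentiable (at (x, t))"
    and "dirderiv (0, 1) (\<lambda>p. lap (\<lambda>y. F (y, snd p)) (fst p)) (x, t)
      = lap (\<lambda>y. dirderiv (0, 1) F (y, t)) x"
proof -
  let ?L = "\<lambda>p. \<Sum>b\<in>Basis. dirderiv (b, 0) (dirderiv (b, 0) F) p"
  have U: "open U" using smooth_on_open[OF F] .
  have L_eq: "?L p = lap (\<lambda>y. F (y, snd p)) (fst p)" if "p \<in> U" for p
    using lap_slice[OF F, of "fst p" "snd p"] that by simp
  have L: "smooth_on U ?L"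
    using F U by (intro smooth_on_sum finite_Basis smooth_on_dirderiv)
  show "(\<lambda>p. lap (\<lambda>y. F (y, snd p)) (fst p)) differentiable (at (x, t))"
    using differentiable_cong_open[OF U xt L_eq smooth_on_imp_differentiable[OF L xt]] .
  have "dirderiv (0, 1) (\<lambda>p. lap (\<lambda>y. F (y, snd p)) (fst p)) (x, t) = dirderiv (0, 1) ?L (x, t)"
    using L_eq by (intro dirderiv_cong_open[OF U xt]) simp
  also have "\<dots> = (\<Sum>b\<in>Basis. dirderiv (0, 1) (dirderiv (b, 0) (dirderiv (b, 0) F)) (x, t))"
    by (intro dirderiv_sum finite_Basis smooth_on_imp_differentiable[OF _ xt] smooth_on_dirderiv F)
  also have "\<dots> = (\<Sum>b\<in>Basis. dirderiv (b, 0) (dirderiv (b, 0) (dirderiv (0, 1) F)) (x, t))"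
    by (simp add: dirderiv_commute3[OF F xt, where u="(0, 1)", symmetric])
  also have "\<dots> = lap (\<lambda>y. dirderiv (0, 1) F (y, t)) x"
    using lap_slice[OF smooth_on_dirderiv[OF F] xt] by simp
  finally show "dirderiv (0, 1) (\<lambda>p. lap (\<lambda>y. F (y, snd p)) (fst p)) (x, t)
      = lap (\<lambda>y. dirderiv (0, 1) F (y, t)) x" .
qed

lemma dirderiv_time_norm_grad_slice:
  fixes F :: "'a::euclidean_space \<times> real \<Rightarrow> real"
  assumes F: "smooth_on U F" and xt: "(x, t) \<in> U"
  shows "(\<lambda>p. (norm (grad (\<lambda>y. F (y, snd p)) (fst p)))\<^sup>2) differentiable (at (x, t))"
    and "dirderiv (0, 1) (\<lambda>p. (norm (grad (\<lambda>y. F (y, snd p)) (fst p)))\<^sup>2) (x, t)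
      = 2 * (grad (\<lambda>y. F (y, t)) x \<bullet> grad (\<lambda>y. dirderiv (0, 1) F (y, t)) x)"
proof -
  let ?N = "\<lambda>p. \<Sum>b\<in>Basis. dirderiv (b, 0) F p * dirderiv (b, 0) F p"
  have U: "open U" using smooth_on_open[OF F] .
  have N_eq: "?N p = (norm (grad (\<lambda>y. F (y, snd p)) (fst p)))\<^sup>2" if "p \<in> U" for p
    using norm_grad_slice_power2[OF F, of "fst p" "snd p"] that by (simp add: power2_eq_square)
  have N: "smooth_on U ?N"
    using F U by (intro smooth_on_sum finite_Basis smooth_on_mult smooth_on_dirderiv)
  show "(\<lambda>p. (norm (grad (\<lambda>y. F (y, snd p)) (fst p)))\<^sup>2) differentiable (at (x, t))"
    using differentiable_cong_open[OF U xt N_eq smooth_on_imp_differentiable[OF N xt]] .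
  have D: "dirderiv (b, 0) F differentiable (at (x, t))" for b
    by (intro smooth_on_imp_differentiable[OF _ xt] smooth_on_dirderiv F)
  have "dirderiv (0, 1) (\<lambda>p. (norm (grad (\<lambda>y. F (y, snd p)) (fst p)))\<^sup>2) (x, t)
      = dirderiv (0, 1) ?N (x, t)"
    using N_eq by (intro dirderiv_cong_open[OF U xt]) simp
  also have "\<dots> = (\<Sum>b\<in>Basis. 2 * (dirderiv (b, 0) F (x, t) * dirderiv (0, 1) (dirderiv (b, 0) F) (x, t)))"
    by (simp add: dirderiv_sum dirderiv_mult D differentiable_mult)
  also have "\<dots> = (\<Sum>b\<in>Basis. 2 * (dirderiv (b, 0) F (x, t) * dirderiv (b, 0) (dirderiv (0, 1) F) (x, t)))"
    by (simp add: dirderiv_commute[OF F xt, of "(0, 1)"])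
  also have "\<dots> = 2 * (grad (\<lambda>y. F (y, t)) x \<bullet> grad (\<lambda>y. dirderiv (0, 1) F (y, t)) x)"
    using iter_dirderiv_slice[OF F xt, of "[b]" for b]
      iter_dirderiv_slice[OF smooth_on_dirderiv[OF F] xt, of "[b]" for b]
    by (simp add: inner_grad sum_distrib_left)
  finally show "dirderiv (0, 1) (\<lambda>p. (norm (grad (\<lambda>y. F (y, snd p)) (fst p)))\<^sup>2) (x, t)
      = 2 * (grad (\<lambda>y. F (y, t)) x \<bullet> grad (\<lambda>y. dirderiv (0, 1) F (y, t)) x)" .
qed

text \<open>The total time derivative d/dt of the paper, along a trajectory \<open>\<gamma>\<close>.\<close>
lemma has_real_derivative_along_path:
  fixes G :: "'a::euclidean_space \<times> real \<Rightarrow> real"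
  assumes G: "G differentiable (at (\<gamma> t, t))" and \<gamma>: "(\<gamma> has_vector_derivative v) (at t)"
  shows "((\<lambda>s. G (\<gamma> s, s)) has_real_derivative
    dirderiv (0, 1) G (\<gamma> t, t) + grad (\<lambda>y. G (y, t)) (\<gamma> t) \<bullet> v) (at t)"
proof -
  have "((\<lambda>s. (\<gamma> s, s)) has_derivative (\<lambda>r. r *\<^sub>R (v, 1))) (at t)"
    using \<gamma> by (auto intro!: derivative_eq_intros simp: has_vector_derivative_def)
  from has_derivative_compose[OF this has_derivative_dirderiv[OF G]]
  have deriv: "((\<lambda>s. G (\<gamma> s, s)) has_derivative (\<lambda>r. dirderiv (r *\<^sub>R (v, 1)) G (\<gamma> t, t))) (at t)" .
  have "(\<lambda>y. G (y, t)) differentiable (at (\<gamma> t))"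
    using differentiable_chain_at[of "\<lambda>y. (y, t)" "\<gamma> t" G] G by (simp add: o_def)
  then have "dirderiv (v, 0) G (\<gamma> t, t) = grad (\<lambda>y. G (y, t)) (\<gamma> t) \<bullet> v"
    using dirderiv_slice[OF G, of v] dirderiv_eq_inner_grad[of "\<lambda>y. G (y, t)" "\<gamma> t" v] by simp
  moreover have "dirderiv (v, 1) G (\<gamma> t, t) = dirderiv (0, 1) G (\<gamma> t, t) + dirderiv (v, 0) G (\<gamma> t, t)"
    using linear_add[OF linear_dirderiv[OF G], of "(0, 1)" "(v, 0)"] by simp
  ultimately have "(\<lambda>r. dirderiv (r *\<^sub>R (v, 1)) G (\<gamma> t, t))
      = (*) (dirderiv (0, 1) G (\<gamma> t, t) + grad (\<lambda>y. G (y, t)) (\<gamma> t) \<bullet> v)"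
    unfolding linear_cmul[OF linear_dirderiv[OF G]] by (simp add: fun_eq_iff mult.commute)
  with deriv show ?thesis by (simp add: has_field_derivative_def)
qed

section \<open>Evolution of W\<close>

lemma sum_power2_minus_delta:
  fixes H :: "'b \<Rightarrow> 'b \<Rightarrow> real"
  assumes "finite A"
  shows "(\<Sum>i\<in>A. \<Sum>j\<in>A. (H i j - (if i = j then k else 0))\<^sup>2)
     = (\<Sum>i\<in>A. \<Sum>j\<in>A. (H i j)\<^sup>2) - 2 * k * (\<Sum>i\<in>A. H i i) + k\<^sup>2 * card A"
proof -
  have "(H i j - (if i = j then k else 0))\<^sup>2 = (H i j)\<^sup>2 + (if i = j then k\<^sup>2 - 2 * k * H i i else 0)"
    for i j
    by (auto simp: power2_eq_square algebra_simps)
  then show ?thesis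
    using assms by (simp add: sum.distrib sum_subtractf sum_distrib_left)
qed

text \<open>\<open>h\<close> plays the role of the time derivative of f; since \<open>\<tau>' = -1\<close>, the first three
  terms on the left are then the partial time derivative of W.\<close>
lemma W_evolution_fixed_time:
  fixes g h W :: "'a::euclidean_space \<Rightarrow> real"
  assumes g: "smooth_on S g" and x: "x \<in> S" and a: "a > 0"
    and h: "\<And>y. y \<in> S \<Longrightarrow> h y = - lap g y + (norm (grad g y))\<^sup>2 + DIM('a) / (2 * a)"
    and W: "\<And>y. y \<in> S \<Longrightarrow> W y = a * (2 * lap g y - (norm (grad g y))\<^sup>2) + g y - DIM('a)"
  shows "- (2 * lap g x - (norm (grad g x))\<^sup>2) + a * (2 * lap h x - 2 * (grad g x \<bullet> grad h x))
      + h x + lap W x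
    = 2 * a * (\<Sum>i\<in>Basis. \<Sum>j\<in>Basis. (hess g x i j - (if i = j then 1 / (2 * a) else 0))\<^sup>2)
      + 2 * (grad W x \<bullet> grad g x)"
proof -
  define Q where "Q y = (norm (grad g y))\<^sup>2" for y
  have S: "open S" using smooth_on_open[OF g] .
  have L: "smooth_on S (lap g)" using smooth_on_lap[OF g] .
  have Q: "smooth_on S Q" unfolding Q_def[abs_def] using smooth_on_norm_grad_power2[OF g] .
  note D = smooth_on_imp_differentiable[OF _ x]
  note smooth = smooth_on_add[where U=S] smooth_on_diff[where U=S] smooth_on_cmult[where U=S]
    smooth_on_const[OF S] g L Q
  have "lap h x = lap (\<lambda>y. Q y - lap g y + DIM('a) / (2 * a)) x"
    using h by (intro lap_cong_open[OF S x]) (simp add: Q_def)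
  also have "\<dots> = lap Q x - lap (lap g) x"
    by (simp add: lap_add[where S=S] lap_diff[where S=S] lap_const smooth x)
  finally have lap_h: "lap h x = lap Q x - lap (lap g) x" .
  have "grad h x = grad (\<lambda>y. Q y - lap g y + DIM('a) / (2 * a)) x"
    using h by (intro grad_cong_open[OF S x]) (simp add: Q_def)
  also have "\<dots> = grad Q x - grad (lap g) x"
    by (simp add: grad_add grad_diff grad_const D smooth differentiable_diff)
  finally have grad_h: "grad h x = grad Q x - grad (lap g) x" .
  have "lap W x = lap (\<lambda>y. a * (2 * lap g y - Q y) + g y - DIM('a)) x"
    using W by (intro lap_cong_open[OF S x]) (simp add: Q_def)
  also have "\<dots> = a * (2 * lap (lap g) x - lap Q x) + lap g x"
    by (simp add: lap_add[where S=S] lap_diff[where S=S] lap_cmult[where S=S] lap_const smooth x)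
  finally have lap_W: "lap W x = a * (2 * lap (lap g) x - lap Q x) + lap g x" .
  have "grad W x = grad (\<lambda>y. a * (2 * lap g y - Q y) + g y - DIM('a)) x"
    using W by (intro grad_cong_open[OF S x]) (simp add: Q_def)
  also have "\<dots> = a *\<^sub>R (2 *\<^sub>R grad (lap g) x - grad Q x) + grad g x"
    by (simp add: grad_add grad_diff grad_cmult grad_const D smooth differentiable_diff
        differentiable_add differentiable_mult)
  finally have grad_W: "grad W x = a *\<^sub>R (2 *\<^sub>R grad (lap g) x - grad Q x) + grad g x" .
  have lap_Q: "lap Q x = 2 * (\<Sum>i\<in>Basis. \<Sum>j\<in>Basis. (hess g x i j)\<^sup>2) + 2 * (grad g x \<bullet> grad (lap g) x)"
    unfolding Q_def using lap_norm_grad_power2[OF g x] .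
  have hess_sq: "(\<Sum>i\<in>Basis. \<Sum>j\<in>Basis. (hess g x i j - (if i = j then 1 / (2 * a) else 0))\<^sup>2)
      = (\<Sum>i\<in>Basis. \<Sum>j\<in>Basis. (hess g x i j)\<^sup>2) - lap g x / a + DIM('a) / (4 * a\<^sup>2)"
    unfolding sum_power2_minus_delta[OF finite_Basis] lap_def hess_def
    using a by (simp add: field_simps power2_eq_square)
  show ?thesis
    unfolding hess_sq lap_h grad_h lap_W grad_W lap_Q h[OF x]
    using a by (simp add: inner_add_right inner_diff_right inner_add_left inner_diff_left
        dot_square_norm inner_commute field_simps power2_eq_square)
qed

lemma Wfun_time_derivative:
  fixes f :: "'a::euclidean_space \<Rightarrow> real \<Rightarrow> real"
  assumes f: "smooth_on U (\<lambda>(y, s). f y s)" and xt: "(x, t) \<in> U"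
    and \<tau>: "(\<tau> has_real_derivative -1) (at t)"
  defines "h \<equiv> \<lambda>y. dirderiv (0, 1) (\<lambda>(y, s). f y s) (y, t)"
  shows "(\<lambda>p. Wfun \<tau> f (fst p) (snd p)) differentiable (at (x, t))"
    and "dirderiv (0, 1) (\<lambda>p. Wfun \<tau> f (fst p) (snd p)) (x, t)
      = - (2 * lap (\<lambda>y. f y t) x - (norm (grad (\<lambda>y. f y t) x))\<^sup>2)
        + \<tau> t * (2 * lap h x - 2 * (grad (\<lambda>y. f y t) x \<bullet> grad h x)) + h x"
proof -
  let ?L = "\<lambda>p. lap (\<lambda>y. f y (snd p)) (fst p)"
  let ?N = "\<lambda>p. (norm (grad (\<lambda>y. f y (snd p)) (fst p)))\<^sup>2"
  let ?F = "\<lambda>p. f (fst p) (snd p)"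
  have W: "(\<lambda>p. Wfun \<tau> f (fst p) (snd p)) = (\<lambda>p. \<tau> (snd p) * (2 * ?L p - ?N p) + ?F p - DIM('a))"
    by (simp add: Wfun_def)
  have L: "?L differentiable (at (x, t))" "dirderiv (0, 1) ?L (x, t) = lap h x"
    using dirderiv_time_lap_slice[OF f xt] by (simp_all add: h_def)
  have N: "?N differentiable (at (x, t))"
    "dirderiv (0, 1) ?N (x, t) = 2 * (grad (\<lambda>y. f y t) x \<bullet> grad h x)"
    using dirderiv_time_norm_grad_slice[OF f xt] by (simp_all add: h_def)
  have F: "?F differentiable (at (x, t))" "dirderiv (0, 1) ?F (x, t) = h x"
    using smooth_on_imp_differentiable[OF f xt] by (simp_all add: h_def case_prod_beta')
  have "(\<tau> has_derivative (*) (-1)) (at (snd (x, t)))"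
    using \<tau> by (simp add: has_field_derivative_def)
  from has_derivative_compose[OF has_derivative_snd[OF has_derivative_ident] this]
  have "((\<lambda>p. \<tau> (snd p)) has_derivative (\<lambda>p. - snd p)) (at (x, t))" by simp
  then have T: "(\<lambda>p. \<tau> (snd p)) differentiable (at (x, t))" "dirderiv (0, 1) (\<lambda>p. \<tau> (snd p)) (x, t) = -1"
    by (auto simp: differentiable_def dirderiv_eqI)
  show "(\<lambda>p. Wfun \<tau> f (fst p) (snd p)) differentiable (at (x, t))"
    unfolding W using L N F T by (simp add: differentiable_mult differentiable_diff differentiable_add)
  show "dirderiv (0, 1) (\<lambda>p. Wfun \<tau> f (fst p) (snd p)) (x, t)
      = - (2 * lap (\<lambda>y. f y t) x - (norm (grad (\<lambda>y. f y t) x))\<^sup>2)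
        + \<tau> t * (2 * lap h x - 2 * (grad (\<lambda>y. f y t) x \<bullet> grad h x)) + h x"
    unfolding W using L N F T
    by (simp add: dirderiv_diff dirderiv_add dirderiv_mult dirderiv_const differentiable_mult
        differentiable_diff differentiable_add algebra_simps)
qed

lemma W_evolution_along_flow:
  fixes f :: "'a::euclidean_space \<Rightarrow> real \<Rightarrow> real"
  assumes F: "smooth_on U (\<lambda>(y, s). f y s)" and S: "open S" "S \<subseteq> {y. (y, t) \<in> U}"
    and x: "\<gamma> t \<in> S" and flow: "(\<gamma> has_vector_derivative - grad (\<lambda>y. f y t) (\<gamma> t)) (at t)"
    and f_eq: "\<And>y. y \<in> S \<Longrightarrow> deriv (\<lambda>s. f y s) t + lap (\<lambda>y. f y t) y
      = (norm (grad (\<lambda>y. f y t) y))\<^sup>2 + DIM('a) / (2 * \<tau> t)"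
    and \<tau>: "\<tau> t > 0" "(\<tau> has_real_derivative -1) (at t)"
  shows "deriv (\<lambda>s. Wfun \<tau> f (\<gamma> s) s) t + lap (\<lambda>y. Wfun \<tau> f y t) (\<gamma> t)
    = 2 * \<tau> t * (\<Sum>i\<in>Basis. \<Sum>j\<in>Basis.
        (hess (\<lambda>y. f y t) (\<gamma> t) i j - (if i = j then 1 / (2 * \<tau> t) else 0))\<^sup>2)
      + grad (\<lambda>y. Wfun \<tau> f y t) (\<gamma> t) \<bullet> grad (\<lambda>y. f y t) (\<gamma> t)"
proof -
  define g where "g = (\<lambda>y. f y t)"
  define h where "h = (\<lambda>y. dirderiv (0, 1) (\<lambda>(y, s). f y s) (y, t))"
  define W where "W = (\<lambda>y. Wfun \<tau> f y t)"
  have xt: "(\<gamma> t, t) \<in> U" using S(2) x by auto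
  have g: "smooth_on S g"
    using smooth_on_subset[OF smooth_on_slice[OF F] S] by (simp add: g_def)
  have h: "h y = - lap g y + (norm (grad g y))\<^sup>2 + DIM('a) / (2 * \<tau> t)" if "y \<in> S" for y
  proof -
    have "((\<lambda>s. f y s) has_real_derivative h y) (at t)"
      using has_real_derivative_along_path[of "\<lambda>(y, s). f y s" "\<lambda>s. y" t 0]
        smooth_on_imp_differentiable[OF F] that S(2)
      by (auto simp: h_def)
    then have "deriv (\<lambda>s. f y s) t = h y" by (rule DERIV_imp_deriv)
    then show ?thesis using f_eq[OF that] by (simp add: g_def)
  qed
  have "W y = \<tau> t * (2 * lap g y - (norm (grad g y))\<^sup>2) + g y - DIM('a)" for y
    by (simp add: W_def Wfun_def g_def)
  note spatial = W_evolution_fixed_time[OF g x \<tau>(1) h this]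
  from has_real_derivative_along_path[OF Wfun_time_derivative(1)[OF F xt \<tau>(2)] flow]
  have "deriv (\<lambda>s. Wfun \<tau> f (\<gamma> s) s) t
      = dirderiv (0, 1) (\<lambda>p. Wfun \<tau> f (fst p) (snd p)) (\<gamma> t, t) - grad W (\<gamma> t) \<bullet> grad g (\<gamma> t)"
    by (simp add: DERIV_imp_deriv W_def g_def)
  moreover have "dirderiv (0, 1) (\<lambda>p. Wfun \<tau> f (fst p) (snd p)) (\<gamma> t, t)
      = - (2 * lap g (\<gamma> t) - (norm (grad g (\<gamma> t)))\<^sup>2)
        + \<tau> t * (2 * lap h (\<gamma> t) - 2 * (grad g (\<gamma> t) \<bullet> grad h (\<gamma> t))) + h (\<gamma> t)"
    using Wfun_time_derivative(2)[OF F xt \<tau>(2)] by (simp add: g_def h_def)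
  ultimately show ?thesis
    using spatial unfolding W_def[symmetric] g_def[symmetric] by linarith
qed

theorem proposition3p1:
  fixes \<Omega>0 :: "'a::euclidean_space set"
    and \<Omega> :: "real \<Rightarrow> 'a set"
    and \<phi> :: "'a \<Rightarrow> real \<Rightarrow> 'a"
    and f :: "'a \<Rightarrow> real \<Rightarrow> real"
    and \<tau> :: "real \<Rightarrow> real"
    and T :: real
  assumes open0: "open \<Omega>0"
    and openOm: "\<forall>t\<in>{0<..<T}. open (\<Omega> t)"
    and diffeo: "smooth_diffeo_family \<phi> \<Omega>0 \<Omega> T"
    and f_smooth: "\<exists>U. {(x, t). t \<in> {0<..<T} \<and> x \<in> \<Omega> t} \<subseteq> U \<and> smooth_on U (\<lambda>(x, t). f x t)"
    and flow: "\<forall>t\<in>{0<..<T}. \<forall>q. \<phi> q t \<in> \<Omega> t \<longrightarrow>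
                 ((\<lambda>s. \<phi> q s) has_vector_derivative - grad (\<lambda>y. f y t) (\<phi> q t)) (at t)"
    and f_eq: "\<forall>t\<in>{0<..<T}. \<forall>x\<in>\<Omega> t.
                 deriv (\<lambda>s. f x s) t + lap (\<lambda>y. f y t) x
                   = (norm (grad (\<lambda>y. f y t) x))\<^sup>2 + real DIM('a) / (2 * \<tau> t)"
    and tau_pos: "\<forall>t\<in>{0<..<T}. \<tau> t > 0"
    and tau_deriv: "\<forall>t\<in>{0<..<T}. (\<tau> has_real_derivative -1) (at t)"
  shows "\<forall>t\<in>{0<..<T}. \<forall>q. \<phi> q t \<in> \<Omega> t \<longrightarrow>
           deriv (\<lambda>s. Wfun \<tau> f (\<phi> q s) s) t + lap (\<lambda>y. Wfun \<tau> f y t) (\<phi> q t)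
             = 2 * \<tau> t * (\<Sum>i\<in>Basis. \<Sum>j\<in>Basis.
                   (hess (\<lambda>y. f y t) (\<phi> q t) i j - (if i = j then 1 / (2 * \<tau> t) else 0))\<^sup>2)
               + grad (\<lambda>y. Wfun \<tau> f y t) (\<phi> q t) \<bullet> grad (\<lambda>y. f y t) (\<phi> q t)"
proof (intro ballI allI impI, goal_cases)
  case (1 t q)
  obtain U where U: "{(x, t). t \<in> {0<..<T} \<and> x \<in> \<Omega> t} \<subseteq> U"
    and F: "smooth_on U (\<lambda>(x, t). f x t)"
    using f_smooth by blast
  show ?case
  proof (rule W_evolution_along_flow[OF F])
    show "\<Omega> t \<subseteq> {y. (y, t) \<in> U}" using U 1 by auto
  qed (use 1 openOm flow f_eq tau_pos tau_deriv in auto)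
qed

end
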